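(* Consider the two-point dormancy model described in the context and assume $\lim_{N\to\infty}N\omega_N=0$. Then $\lim_{N\to\infty}c_N=0$. Moreover, if $\lambda_NT_N=\beta\log(\kappa N)$ for constants $\kappa,\beta>0$, then as $N\to\infty$: \begin{enumerate} \item if $\beta>1$, $c_N\sim N\omega_N$; \item if $\beta=1$, $c_N\sim N\omega_N\,E[Y_\kappa^2]$, where $Y_\kappa$ is a $[0,1]$-valued random variable with $\mathbb{P}(Y_\kappa>x)=e^{-\frac{x}{\kappa(1-x)}}$; \item if $\beta<1$, $c_N\sim2\kappa^{2\beta}\omega_NN^{2\beta-1}$. \end{enumerate}
   Context: Two-point dormancy model: for each $N$, the population of $N$ individuals evolves in days of length $T_N$ with no summer. Individual $i$ wakes up at time $0$ with probability $\omega_N$ and at time $T_N$ with probability $1-\omega_N$, independently; after waking it and its descendants reproduce as a Yule process with rate $\lambda_N$ until time $T_N$. Equivalently, the number of descendants at time $T_N$ is $X_{i,N}=b_{i,N}G_{i,N}+(1-b_{i,N})$, where $(b_{i,N})_i$ are i.i.d. Bernoulli$(\omega_N)$ and $(G_{i,N})_i$ are i.i.d. geometric on $\{1,2,\dots\}$ with parameter $e^{-\lambda_NT_N}$ (i.e. $\mathbb{P}(G>k)=(1-e^{-\lambda_NT_N})^k$), independent of the $b$'s. With $S_N=\sum_iX_{i,N}$, $N$ of the $S_N$ individuals are sampled uniformly without replacement to form the next day's population; $\nu_{i,N}$ is the number sampled descended from $i$. $c_N=E[(\nu_{1,N})_2]/(N-1)$ with $(x)_k$ the falling factorial. *)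

theory Defs
  imports "HOL-Probability.Probability"
begin

definition ffact2 :: "nat \<Rightarrow> real" where
  "ffact2 v = real v * (real v - 1)"

text \<open>Law of the number of descendants X = b G + (1 - b) at time T_N of one individual:
  b ~ Bernoulli(omega), G geometric on {1,2,...} with P(G > k) = (1 - e^{-lam T})^k,
  i.e. G = 1 + (geometric_pmf with success parameter e^{-lam T}).\<close>
definition X_pmf :: "real \<Rightarrow> real \<Rightarrow> real \<Rightarrow> nat pmf" where
  "X_pmf omega lam T =
     bind_pmf (bernoulli_pmf omega)
       (\<lambda>b. if b then map_pmf Suc (geometric_pmf (exp (- (lam * T)))) else return_pmf 1)"

definition Xvec_pmf :: "real \<Rightarrow> real \<Rightarrow> real \<Rightarrow> nat \<Rightarrow> (nat \<Rightarrow> nat) pmf" where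
  "Xvec_pmf omega lam T N = Pi_pmf {..<N} 0 (\<lambda>_. X_pmf omega lam T)"

text \<open>The S_N individuals present at time T_N: (i, j) is the j-th descendant of individual i.\<close>
definition individuals :: "(nat \<Rightarrow> nat) \<Rightarrow> nat \<Rightarrow> (nat \<times> nat) set" where
  "individuals X N = {(i, j). i < N \<and> j < X i}"

text \<open>Law of nu_{1,N}: sample N of the S_N individuals uniformly without replacement and
  count those descended from the first individual (index 0).\<close>
definition nu1_pmf :: "real \<Rightarrow> real \<Rightarrow> real \<Rightarrow> nat \<Rightarrow> nat pmf" where
  "nu1_pmf omega lam T N =
     bind_pmf (Xvec_pmf omega lam T N)
       (\<lambda>X. map_pmf (\<lambda>A. card {p \<in> A. fst p = 0})
              (pmf_of_set {A. A \<subseteq> individuals X N \<and> card A = N}))"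

definition cN :: "(nat \<Rightarrow> real) \<Rightarrow> (nat \<Rightarrow> real) \<Rightarrow> (nat \<Rightarrow> real) \<Rightarrow> nat \<Rightarrow> real" where
  "cN omega lam T N =
     measure_pmf.expectation (nu1_pmf (omega N) (lam N) (T N) N) ffact2 / (real N - 1)"

end

theory Submission
  imports Defs "HOL-Real_Asymp.Real_Asymp"
begin

(*
  Given the family sizes X, the number of sampled descendants of individual 0 is hypergeometric,
  so E[(nu)_2 | X] = (N)_2 (X_0)_2 / (S_N)_2.  This ratio is largest, and equal to
  h_N(X_0) = (X_0)_2 / (X_0 + N - 1)_2, when all other families are singletons, which happens
  with probability at least (1 - omega_N)^(N-1) >= 1 - N omega_N -> 1.  Hence c_N ~ N omega_N a_N,
  where a_N = E[h_N(G)] for G geometric on {1, 2, ...} with parameter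
  p_N = exp(-lambda_N T_N) = (kappa N)^(-beta).

  If beta > 1, G is much larger than N with high probability and a_N -> 1.  If beta < 1, G is
  much smaller than N and a_N ~ E[(G)_2] / N^2 ~ 2 / (p_N N)^2.  If beta = 1, realise
  G = ceil(E / c_N) from the standard exponential variable E = Y / (kappa (1 - Y)), where
  c_N = -ln(1 - 1 / (kappa N)); then G / N -> kappa E = Y / (1 - Y) almost surely, so
  h_N(G) -> Y^2 and a_N -> E[Y^2] by dominated convergence.
*)

section \<open>Sampling without replacement\<close>

lemma card_off_diagonal:
  assumes "finite C"
  shows "card {(x, y). x \<in> C \<and> y \<in> C \<and> x \<noteq> y} = card C * (card C - 1)"
proof -
  have "{(x, y). x \<in> C \<and> y \<in> C \<and> x \<noteq> y} = C \<times> C - (\<lambda>x. (x, x)) ` C" by auto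
  moreover have "card ((\<lambda>x. (x, x)) ` C) = card C" by (rule card_image) (auto simp: inj_on_def)
  moreover have "(\<lambda>x. (x, x)) ` C \<subseteq> C \<times> C" by auto
  ultimately show ?thesis
    using assms by (simp add: card_Diff_subset card_cartesian_product diff_mult_distrib2)
qed

lemma card_subsets_containing_pair:
  assumes U: "finite U" and xy: "x \<in> U" "y \<in> U" "x \<noteq> y" and n: "2 \<le> n"
  shows "card {A. A \<subseteq> U \<and> card A = n \<and> x \<in> A \<and> y \<in> A} = (card U - 2) choose (n - 2)"
proof -
  have "bij_betw (\<lambda>A. A - {x, y}) {A. A \<subseteq> U \<and> card A = n \<and> x \<in> A \<and> y \<in> A}
          {A'. A' \<subseteq> U - {x, y} \<and> card A' = n - 2}"
  proof (rule bij_betw_byWitness[where f' = "\<lambda>A'. A' \<union> {x, y}"])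
    show "(\<lambda>A. A - {x, y}) ` {A. A \<subseteq> U \<and> card A = n \<and> x \<in> A \<and> y \<in> A}
            \<subseteq> {A'. A' \<subseteq> U - {x, y} \<and> card A' = n - 2}"
      using U xy by (auto simp: card_Diff_subset finite_subset)
    show "(\<lambda>A'. A' \<union> {x, y}) ` {A'. A' \<subseteq> U - {x, y} \<and> card A' = n - 2}
            \<subseteq> {A. A \<subseteq> U \<and> card A = n \<and> x \<in> A \<and> y \<in> A}"
    proof (rule image_subsetI)
      fix A' assume A': "A' \<in> {A'. A' \<subseteq> U - {x, y} \<and> card A' = n - 2}"
      then have "finite A'" "x \<notin> A'" "y \<notin> A'" using U by (auto intro: finite_subset)
      then show "A' \<union> {x, y} \<in> {A. A \<subseteq> U \<and> card A = n \<and> x \<in> A \<and> y \<in> A}"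
        using A' xy n by auto
    qed
  qed auto
  then have "card {A. A \<subseteq> U \<and> card A = n \<and> x \<in> A \<and> y \<in> A}
               = card {A'. A' \<subseteq> U - {x, y} \<and> card A' = n - 2}"
    by (rule bij_betw_same_card)
  also have "\<dots> = card (U - {x, y}) choose (n - 2)"
    using U by (intro n_subsets) auto
  also have "card (U - {x, y}) = card U - 2"
    using U xy by (subst card_Diff_subset) auto
  finally show ?thesis .
qed

lemma binomial_mult_ffact2:
  assumes "2 \<le> n"
  shows "(S choose n) * (n * (n - 1)) = S * (S - 1) * ((S - 2) choose (n - 2))"
proof -
  obtain j where n: "n = Suc (Suc j)" using assms by (metis add_2_eq_Suc le_Suc_ex)
  show ?thesis
  proof (cases "S < 2")
    case True
    then show ?thesis using n by (cases S) auto
  next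
    case False
    then obtain m where S: "S = Suc (Suc m)" by (metis add_2_eq_Suc le_Suc_ex not_less)
    have "(S choose n) * (n * (n - 1)) = ((Suc (Suc m) choose Suc (Suc j)) * Suc (Suc j)) * Suc j"
      by (simp del: binomial_Suc_Suc add: S n algebra_simps)
    also have "\<dots> = Suc (Suc m) * ((Suc m choose Suc j) * Suc j)"
      by (simp only: Suc_times_binomial_eq[symmetric] mult.assoc)
    also have "\<dots> = Suc (Suc m) * (Suc m * (m choose j))"
      by (simp only: Suc_times_binomial_eq)
    finally show ?thesis by (simp del: binomial_Suc_Suc add: S n algebra_simps)
  qed
qed

lemma ffact2_card:
  assumes "finite C"
  shows "ffact2 (card C) = real (card {(x, y). x \<in> C \<and> y \<in> C \<and> x \<noteq> y})"
  using assms by (cases "card C") (simp_all add: card_off_diagonal ffact2_def algebra_simps)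

lemma ffact2_nonneg: "0 \<le> ffact2 v"
  by (cases v) (auto simp: ffact2_def)

lemma ffact2_mono: "a \<le> b \<Longrightarrow> ffact2 a \<le> ffact2 b"
  by (cases a) (use ffact2_nonneg[of b] in \<open>auto simp: ffact2_def intro: mult_mono\<close>)

lemma ffact2_pos_iff: "0 < ffact2 a \<longleftrightarrow> 2 \<le> a"
  by (cases a) (auto simp: ffact2_def zero_less_mult_iff)

lemma ffact2_divide_le_1: "v \<le> a \<Longrightarrow> ffact2 v / ffact2 a \<le> 1"
  using ffact2_mono[of v a] ffact2_nonneg[of a] by (cases "ffact2 a = 0") (auto simp: divide_le_eq_1)

lemma ffact2_divide_antimono:
  assumes "v \<le> a" "a \<le> b"
  shows "ffact2 v / ffact2 b \<le> ffact2 v / ffact2 a"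
proof (cases "2 \<le> a")
  case True
  then show ?thesis
    using assms ffact2_mono[of a b] by (intro divide_left_mono) (auto simp: ffact2_nonneg ffact2_pos_iff)
next
  case False
  with assms have "ffact2 v = 0" by (cases v) (auto simp: ffact2_def)
  then show ?thesis by simp
qed

text \<open>Double counting: each of the \<open>(card B)\<^sub>2\<close> ordered pairs of distinct points of \<open>B\<close>
  lies in exactly \<open>(card U - 2) choose (n - 2)\<close> of the \<open>n\<close>-subsets of \<open>U\<close>.\<close>
lemma sum_ffact2_card_inter_subsets:
  assumes U: "finite U" and B: "B \<subseteq> U" and n: "2 \<le> n"
  shows "(\<Sum>A | A \<subseteq> U \<and> card A = n. ffact2 (card (A \<inter> B)))
           = ffact2 (card B) * real ((card U - 2) choose (n - 2))"
proof -
  define F where "F = {A. A \<subseteq> U \<and> card A = n}"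
  define D where "D = {(x, y). x \<in> B \<and> y \<in> B \<and> x \<noteq> y}"
  have finF: "finite F" unfolding F_def using U by (auto intro: finite_subset[of _ "Pow U"])
  have finB: "finite B" using U B finite_subset by blast
  have finD: "finite D" unfolding D_def by (rule finite_subset[of _ "B \<times> B"]) (use finB in auto)
  have pairs: "ffact2 (card (A \<inter> B)) = (\<Sum>d\<in>D. if fst d \<in> A \<and> snd d \<in> A then 1 else 0)" for A
  proof -
    have "{(x, y). x \<in> A \<inter> B \<and> y \<in> A \<inter> B \<and> x \<noteq> y} = {d \<in> D. fst d \<in> A \<and> snd d \<in> A}"
      unfolding D_def by auto
    then show ?thesis
      using ffact2_card[of "A \<inter> B"] finB sum.inter_filter[OF finD, of "\<lambda>_. 1::real"] by simp
  qed
  have subsets: "(\<Sum>A\<in>F. if fst d \<in> A \<and> snd d \<in> A then 1 else 0) = real ((card U - 2) choose (n - 2))"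
    if d: "d \<in> D" for d
  proof -
    obtain x y where d: "d = (x, y)" "x \<in> U" "y \<in> U" "x \<noteq> y" using d B unfolding D_def by (cases d) auto
    have "(\<Sum>A\<in>F. if fst d \<in> A \<and> snd d \<in> A then 1 else 0) = real (card {A \<in> F. x \<in> A \<and> y \<in> A})"
      using sum.inter_filter[OF finF, of "\<lambda>_. 1::real"] by (simp add: d)
    also have "{A \<in> F. x \<in> A \<and> y \<in> A} = {A. A \<subseteq> U \<and> card A = n \<and> x \<in> A \<and> y \<in> A}"
      by (auto simp: F_def)
    finally show ?thesis using card_subsets_containing_pair[OF U d(2-4) n] by simp
  qed
  have "(\<Sum>A\<in>F. ffact2 (card (A \<inter> B))) = (\<Sum>d\<in>D. \<Sum>A\<in>F. if fst d \<in> A \<and> snd d \<in> A then 1 else 0)"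
    unfolding pairs by (rule sum.swap)
  also have "\<dots> = ffact2 (card B) * real ((card U - 2) choose (n - 2))"
    using subsets ffact2_card[OF finB] by (simp add: D_def)
  finally show ?thesis by (simp add: F_def)
qed

lemma expectation_ffact2_card_inter_uniform_subset:
  assumes U: "finite U" and B: "B \<subseteq> U" and n: "2 \<le> n" "n \<le> card U"
  shows "measure_pmf.expectation (pmf_of_set {A. A \<subseteq> U \<and> card A = n}) (\<lambda>A. ffact2 (card (A \<inter> B)))
         = ffact2 (card B) * ffact2 n / ffact2 (card U)"
proof -
  define F where "F = {A. A \<subseteq> U \<and> card A = n}"
  have "finite F" unfolding F_def using U by (auto intro: finite_subset[of _ "Pow U"])
  have "F \<noteq> {}" unfolding F_def using obtain_subset_with_card_n[OF n(2)] by blast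
  have "real (card F) * ffact2 n = ffact2 (card U) * real ((card U - 2) choose (n - 2))"
    using arg_cong[OF binomial_mult_ffact2[OF n(1), of "card U"], of real] n
    by (simp add: F_def n_subsets[OF U] ffact2_def of_nat_diff)
  moreover have "0 < real (card F)" using \<open>finite F\<close> \<open>F \<noteq> {}\<close> by (simp add: card_gt_0_iff)
  moreover have "0 < ffact2 (card U)" using n by (simp add: ffact2_def)
  ultimately show ?thesis
    unfolding F_def[symmetric] integral_pmf_of_set[OF \<open>F \<noteq> {}\<close> \<open>finite F\<close>]
    using sum_ffact2_card_inter_subsets[OF U B n(1)] by (simp add: F_def field_simps)
qed

section \<open>Geometric and exponential laws\<close>

lemma integrable_measure_pmf_bounded:
  fixes f :: "'a \<Rightarrow> real"
  assumes "\<And>x. x \<in> set_pmf M \<Longrightarrow> \<bar>f x\<bar> \<le> B"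
  shows "integrable (measure_pmf M) f"
  by (rule measure_pmf.integrable_const_bound[where B = B]) (use assms in \<open>auto simp: AE_measure_pmf_iff\<close>)

lemma expectation_bind_pmf_nonneg:
  fixes f :: "'b \<Rightarrow> real"
  assumes f: "\<And>y. 0 \<le> f y" and g: "\<And>x. 0 \<le> g x"
    and int: "\<And>x. x \<in> set_pmf M \<Longrightarrow> integrable (measure_pmf (N x)) f"
    and eq: "\<And>x. x \<in> set_pmf M \<Longrightarrow> measure_pmf.expectation (N x) f = g x"
  shows "measure_pmf.expectation (bind_pmf M N) f = measure_pmf.expectation M g"
proof -
  have "(\<integral>\<^sup>+x. ennreal (f x) \<partial>measure_pmf (bind_pmf M N)) = (\<integral>\<^sup>+x. \<integral>\<^sup>+y. ennreal (f y) \<partial>N x \<partial>M)"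
    by simp
  also have "\<dots> = (\<integral>\<^sup>+x. ennreal (g x) \<partial>M)"
    using nn_integral_eq_integral[OF int] f eq by (intro nn_integral_cong_AE AE_pmfI) simp
  finally show ?thesis
    using f g by (simp add: integral_eq_nn_integral)
qed

lemma geometric_pmf_expectation_sums:
  fixes f :: "nat \<Rightarrow> real"
  assumes p: "0 < p" "p \<le> 1" and f: "\<And>n. 0 \<le> f n" and s: "(\<lambda>n. f n * (1 - p) ^ n) sums s"
  shows "integrable (measure_pmf (geometric_pmf p)) f"
    and "measure_pmf.expectation (geometric_pmf p) f = p * s"
proof -
  have pmf_sums: "(\<lambda>n. pmf (geometric_pmf p) n * f n) sums (p * s)"
    using sums_mult[OF s, of p] p by (simp add: mult_ac)
  have int: "integrable (count_space UNIV) (\<lambda>n. pmf (geometric_pmf p) n * f n)"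
    using pmf_sums p f unfolding integrable_count_space_nat_iff by (simp add: sums_iff)
  then show "integrable (measure_pmf (geometric_pmf p)) f"
    unfolding measure_pmf_eq_density by (subst integrable_density) auto
  have "measure_pmf.expectation (geometric_pmf p) f = (\<integral>n. pmf (geometric_pmf p) n * f n \<partial>count_space UNIV)"
    unfolding measure_pmf_eq_density by (subst integral_density) auto
  also have "\<dots> = p * s"
    using pmf_sums int by (subst integral_count_space_nat) (simp_all add: sums_iff)
  finally show "measure_pmf.expectation (geometric_pmf p) f = p * s" .
qed

lemma has_field_derivative_fact_divide_power:
  fixes z :: real
  assumes z: "z \<noteq> 1"
  shows "((\<lambda>z. fact k / (1 - z) ^ Suc k) has_field_derivative fact (Suc k) / (1 - z) ^ Suc (Suc k)) (at z)"
proof -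
  have "((\<lambda>z. (1 - z) ^ Suc k) has_field_derivative (1 + real k) * (- 1 * (1 - z) ^ k)) (at z)"
    by (intro DERIV_power_Suc derivative_eq_intros) auto
  then have D: "((\<lambda>z. fact k * inverse ((1 - z) ^ Suc k)) has_field_derivative
      fact k * - ((1 + real k) * (- 1 * (1 - z) ^ k) * inverse (((1 - z) ^ Suc k) ^ Suc (Suc 0)))) (at z)"
    using z by (intro DERIV_cmult DERIV_inverse_fun) auto
  have val: "fact k * - ((1 + real k) * (- 1 * w ^ k) * inverse ((w ^ Suc k) ^ Suc (Suc 0)))
      = fact (Suc k) / w ^ Suc (Suc k)" if "w \<noteq> 0" for w :: real
  proof -
    have "(w ^ Suc k) ^ Suc (Suc 0) = w ^ k * w ^ Suc (Suc k)"
      by (simp add: power_mult_distrib power2_eq_square flip: power_add)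
    then show ?thesis using that by (simp add: divide_inverse algebra_simps)
  qed
  have nonzero: "1 - z \<noteq> 0" using z by simp
  from D show ?thesis unfolding val[OF nonzero] divide_inverse .
qed

lemma pochhammer_geometric_sums:
  fixes z :: real
  assumes "norm z < 1"
  shows "(\<lambda>n. pochhammer (real n + 1) k * z ^ n) sums (fact k / (1 - z) ^ Suc k)"
  using assms
proof (induction k arbitrary: z)
  case 0
  then show ?case using geometric_sums[OF 0] by simp
next
  case (Suc k)
  have "(\<lambda>n. diffs (\<lambda>n. pochhammer (real n + 1) k) n * z ^ n) sums (fact (Suc k) / (1 - z) ^ Suc (Suc k))"
    using Suc by (intro termdiffs_sums_strong[OF Suc.IH] has_field_derivative_fact_divide_power) auto
  moreover have "diffs (\<lambda>n. pochhammer (real n + 1) k) n = pochhammer (real n + 1) (Suc k)" for n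
    by (simp add: diffs_def pochhammer_rec add_ac)
  ultimately show ?case by simp
qed

lemma expectation_geometric_pmf_pochhammer:
  assumes p: "0 < p" "p \<le> 1"
  shows "integrable (measure_pmf (geometric_pmf p)) (\<lambda>n. pochhammer (real n + 1) k)"
    and "measure_pmf.expectation (geometric_pmf p) (\<lambda>n. pochhammer (real n + 1) k) = fact k / p ^ k"
proof -
  have sums: "(\<lambda>n. pochhammer (real n + 1) k * (1 - p) ^ n) sums (fact k / p ^ Suc k)"
    using pochhammer_geometric_sums[of "1 - p" k] p by simp
  have nonneg: "0 \<le> pochhammer (real n + 1) k" for n
    by (simp add: pochhammer_nonneg)
  show "integrable (measure_pmf (geometric_pmf p)) (\<lambda>n. pochhammer (real n + 1) k)"
    by (rule geometric_pmf_expectation_sums(1)[OF p nonneg sums])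
  show "measure_pmf.expectation (geometric_pmf p) (\<lambda>n. pochhammer (real n + 1) k) = fact k / p ^ k"
    using geometric_pmf_expectation_sums(2)[OF p nonneg sums] p by simp
qed

lemma geometric_pmf_moments:
  assumes p: "0 < p" "p \<le> 1"
  shows "integrable (measure_pmf (geometric_pmf p)) (\<lambda>k. real k * (real k + 1))"
    and "measure_pmf.expectation (geometric_pmf p) (\<lambda>k. real k * (real k + 1)) = 2 / p^2 - 2 / p"
    and "integrable (measure_pmf (geometric_pmf p)) (\<lambda>k. (real k + 1) * (real k + 2) * (real k + 3))"
    and "measure_pmf.expectation (geometric_pmf p) (\<lambda>k. (real k + 1) * (real k + 2) * (real k + 3)) = 6 / p^3"
proof -
  have rising: "pochhammer (x + 1) 3 = (x + 1) * (x + 2) * (x + 3)" for x :: real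
    by (simp add: pochhammer_Suc eval_nat_numeral algebra_simps)
  note E = expectation_geometric_pmf_pochhammer[OF p]
  have k_k1: "real k * (real k + 1) = pochhammer (real k + 1) 2 - 2 * pochhammer (real k + 1) 1" for k
    by (simp add: pochhammer_Suc eval_nat_numeral algebra_simps)
  show "integrable (measure_pmf (geometric_pmf p)) (\<lambda>k. real k * (real k + 1))"
    unfolding k_k1 by (intro Bochner_Integration.integrable_diff integrable_mult_right E(1))
  have "measure_pmf.expectation (geometric_pmf p) (\<lambda>k. real k * (real k + 1))
      = measure_pmf.expectation (geometric_pmf p) (\<lambda>k. pochhammer (real k + 1) 2)
        - 2 * measure_pmf.expectation (geometric_pmf p) (\<lambda>k. pochhammer (real k + 1) 1)"
    unfolding k_k1 by (subst Bochner_Integration.integral_diff[OF E(1) integrable_mult_right[OF E(1)]])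
      (simp only: integral_mult_right_zero)
  then show "measure_pmf.expectation (geometric_pmf p) (\<lambda>k. real k * (real k + 1)) = 2 / p^2 - 2 / p"
    by (simp only: E(2)) simp
  show "integrable (measure_pmf (geometric_pmf p)) (\<lambda>k. (real k + 1) * (real k + 2) * (real k + 3))"
    using E(1)[of 3] by (simp add: rising)
  show "measure_pmf.expectation (geometric_pmf p) (\<lambda>k. (real k + 1) * (real k + 2) * (real k + 3)) = 6 / p^3"
    using E(2)[of 3] by (simp add: rising fact_numeral)
qed

lemma nat_ceiling_minus_1_bounds:
  assumes "0 \<le> x"
  shows "x - 1 \<le> real (nat (\<lceil>x\<rceil> - 1))" and "real (nat (\<lceil>x\<rceil> - 1)) \<le> x"
  using assms by linarith+

lemma le_nat_ceiling_minus_1_iff: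
  assumes "1 \<le> j"
  shows "j \<le> nat (\<lceil>x\<rceil> - 1) \<longleftrightarrow> real j < x"
proof -
  have "j \<le> nat (\<lceil>x\<rceil> - 1) \<longleftrightarrow> int j < \<lceil>x\<rceil>" using assms by linarith
  then show ?thesis by (simp add: less_ceiling_iff)
qed

lemma (in prob_space) distr_ceiling_div_exponential:
  fixes E :: "'a \<Rightarrow> real"
  assumes [measurable]: "E \<in> borel_measurable M"
    and tail: "\<And>t. 0 \<le> t \<Longrightarrow> prob {w \<in> space M. t < E w} = exp (- t)"
    and c: "0 < c"
  shows "distr M (count_space UNIV) (\<lambda>w. nat (\<lceil>E w / c\<rceil> - 1)) = measure_pmf (geometric_pmf (1 - exp (- c)))"
proof (rule measure_eqI_countable[where A = UNIV])
  fix k :: nat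
  define K where "K w = nat (\<lceil>E w / c\<rceil> - 1)" for w
  have [measurable]: "K \<in> measurable M (count_space UNIV)" unfolding K_def by measurable
  have K_tail: "prob {w \<in> space M. j \<le> K w} = exp (- c * real j)" for j
  proof (cases "j = 0")
    case True
    then show ?thesis by (simp add: prob_space)
  next
    case False
    then have "{w \<in> space M. j \<le> K w} = {w \<in> space M. c * real j < E w}"
      using c by (auto simp: K_def le_nat_ceiling_minus_1_iff pos_less_divide_eq mult.commute)
    then show ?thesis using tail[of "c * real j"] c by simp
  qed
  have "prob {w \<in> space M. K w = k} = prob ({w \<in> space M. k \<le> K w} - {w \<in> space M. Suc k \<le> K w})"
    by (rule arg_cong[where f = prob]) auto
  also have "\<dots> = exp (- c * real k) - exp (- c * real (Suc k))"
    by (subst finite_measure_Diff) (auto simp: K_tail)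
  also have "\<dots> = exp (- c) ^ k * (1 - exp (- c))"
    by (simp add: exp_of_nat_mult[symmetric] algebra_simps exp_add[symmetric])
  finally have "emeasure (distr M (count_space UNIV) K) {k} = ennreal (exp (- c) ^ k * (1 - exp (- c)))"
    by (simp add: emeasure_distr emeasure_eq_measure vimage_def Int_def conj_commute)
  moreover have "(\<lambda>w. nat (\<lceil>E w / c\<rceil> - 1)) = K" by (simp add: K_def fun_eq_iff)
  ultimately show "emeasure (distr M (count_space UNIV) (\<lambda>w. nat (\<lceil>E w / c\<rceil> - 1))) {k}
      = emeasure (measure_pmf (geometric_pmf (1 - exp (- c)))) {k}"
    using c by (simp add: emeasure_pmf_single)
qed simp_all

section \<open>Reduction to the family of individual 0\<close>

lemma set_pmf_X_pmf: "v \<in> set_pmf (X_pmf w l t) \<Longrightarrow> 1 \<le> v"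
  unfolding X_pmf_def by (auto split: if_splits)

lemma set_pmf_Xvec_pmf:
  assumes "X \<in> set_pmf (Xvec_pmf w l t N)" "i < N"
  shows "1 \<le> X i"
  using assms set_pmf_X_pmf unfolding Xvec_pmf_def by (force simp: set_Pi_pmf PiE_dflt_def)

lemma expectation_X_pmf:
  fixes f :: "nat \<Rightarrow> real"
  assumes w: "0 \<le> w" "w \<le> 1" and f: "\<And>v. 0 \<le> f v" "\<And>v. f v \<le> B"
  shows "measure_pmf.expectation (X_pmf w l t) f =
     w * measure_pmf.expectation (geometric_pmf (exp (- (l * t)))) (\<lambda>k. f (Suc k)) + (1 - w) * f 1"
proof -
  define G where "G = geometric_pmf (exp (- (l * t)))"
  have "0 \<le> measure_pmf.expectation G (\<lambda>k. f (Suc k))"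
    by (rule integral_nonneg_AE) (use f in auto)
  then have "measure_pmf.expectation (X_pmf w l t) f =
      measure_pmf.expectation (bernoulli_pmf w) (\<lambda>b. if b then measure_pmf.expectation G (\<lambda>k. f (Suc k)) else f 1)"
    unfolding X_pmf_def G_def[symmetric] using f
    by (intro expectation_bind_pmf_nonneg integrable_measure_pmf_bounded[where B = B]) auto
  also have "\<dots> = w * measure_pmf.expectation G (\<lambda>k. f (Suc k)) + (1 - w) * f 1"
    using w by (subst integral_measure_pmf[of UNIV]) (auto simp: UNIV_bool)
  finally show ?thesis unfolding G_def .
qed

definition pair_ratio :: "nat \<Rightarrow> (nat \<Rightarrow> nat) \<Rightarrow> real" where
  "pair_ratio N X = ffact2 (X 0) / ffact2 (\<Sum>i<N. X i)"

lemma pair_ratio_nonneg: "0 \<le> pair_ratio N X"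
  by (simp add: pair_ratio_def ffact2_nonneg)

lemma expectation_nu1_ffact2:
  assumes N: "2 \<le> N"
  shows "measure_pmf.expectation (nu1_pmf w l t N) ffact2 =
         ffact2 N * measure_pmf.expectation (Xvec_pmf w l t N) (pair_ratio N)"
proof -
  have "measure_pmf.expectation (nu1_pmf w l t N) ffact2 =
        measure_pmf.expectation (Xvec_pmf w l t N) (\<lambda>X. ffact2 N * pair_ratio N X)"
    unfolding nu1_pmf_def
  proof (rule expectation_bind_pmf_nonneg)
    fix X assume X: "X \<in> set_pmf (Xvec_pmf w l t N)"
    define U where "U = individuals X N"
    define B :: "(nat \<times> nat) set" where "B = {0} \<times> {..<X 0}"
    define F where "F = {A. A \<subseteq> U \<and> card A = N}"
    have U: "U = Sigma {..<N} (\<lambda>i. {..<X i})" unfolding U_def individuals_def by auto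
    have "finite U" unfolding U by auto
    have card_U: "card U = (\<Sum>i<N. X i)" unfolding U by (subst card_SigmaI) auto
    have "N \<le> card U"
      using sum_mono[of "{..<N}" "\<lambda>_. 1::nat" X] set_pmf_Xvec_pmf[OF X] by (simp add: card_U)
    have "finite F" unfolding F_def using \<open>finite U\<close> by (auto intro: finite_subset[of _ "Pow U"])
    have "F \<noteq> {}" unfolding F_def using obtain_subset_with_card_n[OF \<open>N \<le> card U\<close>] by blast
    have first_family: "{p \<in> A. fst p = 0} = A \<inter> B" if "A \<in> F" for A
      using that N unfolding F_def B_def U by auto
    have "measure_pmf.expectation (pmf_of_set F) (\<lambda>A. ffact2 (card {p \<in> A. fst p = 0}))
        = measure_pmf.expectation (pmf_of_set F) (\<lambda>A. ffact2 (card (A \<inter> B)))"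
      using \<open>finite F\<close> \<open>F \<noteq> {}\<close> first_family by (simp add: integral_pmf_of_set)
    also have "\<dots> = ffact2 (card B) * ffact2 N / ffact2 (card U)"
      unfolding F_def using \<open>finite U\<close> \<open>N \<le> card U\<close> N
      by (intro expectation_ffact2_card_inter_uniform_subset) (auto simp: B_def U)
    also have "\<dots> = ffact2 N * pair_ratio N X"
      by (simp add: pair_ratio_def B_def card_U)
    finally show "measure_pmf.expectation (map_pmf (\<lambda>A. card {p \<in> A. fst p = 0})
        (pmf_of_set {A. A \<subseteq> individuals X N \<and> card A = N})) ffact2 = ffact2 N * pair_ratio N X"
      by (simp add: F_def U_def)
    show "integrable (measure_pmf (map_pmf (\<lambda>A. card {p \<in> A. fst p = 0})
        (pmf_of_set {A. A \<subseteq> individuals X N \<and> card A = N}))) ffact2"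
      using \<open>finite F\<close> \<open>F \<noteq> {}\<close> by (intro integrable_measure_pmf_finite) (simp add: F_def U_def)
  qed (simp_all add: ffact2_nonneg pair_ratio_nonneg)
  then show ?thesis by simp
qed

definition singleton_pair_ratio :: "nat \<Rightarrow> nat \<Rightarrow> real" where
  "singleton_pair_ratio N v = ffact2 v / ffact2 (v + N - 1)"

lemma singleton_pair_ratio_nonneg: "0 \<le> singleton_pair_ratio N v"
  by (simp add: singleton_pair_ratio_def ffact2_nonneg)

lemma singleton_pair_ratio_le_1: "1 \<le> N \<Longrightarrow> singleton_pair_ratio N v \<le> 1"
  unfolding singleton_pair_ratio_def by (rule ffact2_divide_le_1) simp

lemma singleton_pair_ratio_1 [simp]: "singleton_pair_ratio N 1 = 0" "singleton_pair_ratio N (Suc 0) = 0"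
  by (simp_all add: singleton_pair_ratio_def ffact2_def)

lemma singleton_pair_ratio_Suc:
  "1 \<le> N \<Longrightarrow> singleton_pair_ratio N (Suc k) = real k * (real k + 1) / ((real k + real N) * (real k + real N - 1))"
  by (simp add: singleton_pair_ratio_def ffact2_def of_nat_diff algebra_simps)

lemma sum_family_sizes:
  fixes X :: "nat \<Rightarrow> nat"
  assumes "1 \<le> N" "\<And>i. i < N \<Longrightarrow> 1 \<le> X i"
  shows "X 0 + (N - 1) \<le> (\<Sum>i<N. X i)"
    and "(\<And>i. 0 < i \<Longrightarrow> i < N \<Longrightarrow> X i = 1) \<Longrightarrow> (\<Sum>i<N. X i) = X 0 + (N - 1)"
proof -
  obtain m where N: "N = Suc m" using assms(1) by (cases N) auto
  have "(\<Sum>i<N. X i) = X 0 + (\<Sum>i<m. X (Suc i))" unfolding N by (simp only: sum.lessThan_Suc_shift)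
  moreover have "m \<le> (\<Sum>i<m. X (Suc i))"
    using sum_mono[of "{..<m}" "\<lambda>_. 1::nat"] assms(2) by (force simp: N)
  ultimately show "X 0 + (N - 1) \<le> (\<Sum>i<N. X i)" by (simp add: N)
  assume "\<And>i. 0 < i \<Longrightarrow> i < N \<Longrightarrow> X i = 1"
  then have "(\<Sum>i<m. X (Suc i)) = m" by (simp add: N)
  then show "(\<Sum>i<N. X i) = X 0 + (N - 1)" using \<open>(\<Sum>i<N. X i) = _\<close> by (simp add: N)
qed

lemma pair_ratio_le_singleton_pair_ratio:
  fixes X :: "nat \<Rightarrow> nat"
  assumes N: "1 \<le> N" and X: "\<And>i. i < N \<Longrightarrow> 1 \<le> X i"
  shows "pair_ratio N X \<le> singleton_pair_ratio N (X 0)"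
proof -
  have "X 0 + N - 1 \<le> (\<Sum>i<N. X i)" using sum_family_sizes(1)[OF N X] N by simp
  then show ?thesis
    unfolding pair_ratio_def singleton_pair_ratio_def using N by (intro ffact2_divide_antimono) auto
qed

lemma pair_ratio_eq_singleton_pair_ratio:
  fixes X :: "nat \<Rightarrow> nat"
  assumes N: "1 \<le> N" and X: "\<And>i. i < N \<Longrightarrow> 1 \<le> X i"
    and singletons: "\<And>i. 0 < i \<Longrightarrow> i < N \<Longrightarrow> X i = 1"
  shows "pair_ratio N X = singleton_pair_ratio N (X 0)"
proof -
  have "(\<Sum>i<N. X i) = X 0 + N - 1" using sum_family_sizes(2)[OF N X singletons] N by simp
  then show ?thesis unfolding pair_ratio_def singleton_pair_ratio_def by simp
qed

definition geom_pair_ratio :: "nat \<Rightarrow> real \<Rightarrow> real" where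
  "geom_pair_ratio N p = measure_pmf.expectation (geometric_pmf p) (\<lambda>k. singleton_pair_ratio N (Suc k))"

lemma geom_pair_ratio_nonneg: "0 \<le> geom_pair_ratio N p"
  unfolding geom_pair_ratio_def by (rule integral_nonneg_AE) (simp add: singleton_pair_ratio_nonneg)

lemma integrable_singleton_pair_ratio:
  "1 \<le> N \<Longrightarrow> integrable (measure_pmf M) (\<lambda>x. singleton_pair_ratio N (f x))"
  by (rule integrable_measure_pmf_bounded[where B = 1])
     (simp add: singleton_pair_ratio_nonneg singleton_pair_ratio_le_1)

lemma geom_pair_ratio_le_1:
  assumes "1 \<le> N"
  shows "geom_pair_ratio N p \<le> 1"
proof -
  have "geom_pair_ratio N p \<le> measure_pmf.expectation (geometric_pmf p) (\<lambda>_. 1)"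
    unfolding geom_pair_ratio_def using assms
    by (intro integral_mono integrable_singleton_pair_ratio) (auto simp: singleton_pair_ratio_le_1)
  then show ?thesis by simp
qed

lemma prod_singleton_indicators_le_pair_ratio:
  fixes X :: "nat \<Rightarrow> nat"
  assumes N: "1 \<le> N" and X: "\<And>i. i < N \<Longrightarrow> 1 \<le> X i"
  shows "(\<Prod>i<N. if i = 0 then singleton_pair_ratio N (X i) else of_bool (X i = 1)) \<le> pair_ratio N X"
proof (cases "\<forall>i. 0 < i \<longrightarrow> i < N \<longrightarrow> X i = 1")
  case True
  obtain m where Nm: "N = Suc m" using N by (cases N) auto
  have "(\<Prod>i<N. if i = 0 then singleton_pair_ratio N (X i) else of_bool (X i = 1))
      = singleton_pair_ratio N (X 0)"
    using True unfolding Nm by (simp add: prod.lessThan_Suc_shift del: prod.lessThan_Suc)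
  also have "\<dots> = pair_ratio N X"
    using N X True by (intro pair_ratio_eq_singleton_pair_ratio[symmetric]) auto
  finally show ?thesis by simp
next
  case False
  then obtain i where "0 < i" "i < N" "X i \<noteq> 1" by auto
  then have "(\<Prod>i<N. if i = 0 then singleton_pair_ratio N (X i) else of_bool (X i = 1)) = 0"
    by (intro prod_zero) (auto intro!: bexI[of _ i])
  then show ?thesis using pair_ratio_nonneg[of N X] by linarith
qed

lemma integrable_pair_ratio:
  assumes "1 \<le> N"
  shows "integrable (measure_pmf (Xvec_pmf w l t N)) (pair_ratio N)"
proof (rule integrable_measure_pmf_bounded[where B = 1])
  fix X assume "X \<in> set_pmf (Xvec_pmf w l t N)"
  then have "pair_ratio N X \<le> singleton_pair_ratio N (X 0)"
    using assms set_pmf_Xvec_pmf by (intro pair_ratio_le_singleton_pair_ratio) auto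
  then show "\<bar>pair_ratio N X\<bar> \<le> 1"
    using assms singleton_pair_ratio_le_1[of N "X 0"] pair_ratio_nonneg[of N X] by simp
qed

lemma expectation_X_pmf_singleton_pair_ratio:
  assumes "1 \<le> N" "0 \<le> w" "w \<le> 1"
  shows "measure_pmf.expectation (X_pmf w l t) (singleton_pair_ratio N) = w * geom_pair_ratio N (exp (- (l * t)))"
  using assms expectation_X_pmf[of w "singleton_pair_ratio N" 1 l t]
  by (simp add: geom_pair_ratio_def singleton_pair_ratio_nonneg singleton_pair_ratio_le_1)

lemma expectation_X_pmf_singleton_ge:
  assumes "0 \<le> w" "w \<le> 1"
  shows "1 - w \<le> measure_pmf.expectation (X_pmf w l t) (\<lambda>v. of_bool (v = 1))"
proof -
  have "0 \<le> measure_pmf.expectation (geometric_pmf (exp (- (l * t)))) (\<lambda>k. of_bool (Suc k = 1) :: real)"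
    by (rule integral_nonneg_AE) simp
  then show ?thesis
    using assms expectation_X_pmf[of w "\<lambda>v. of_bool (v = 1)" 1 l t] by simp
qed

lemma expectation_pair_ratio_le:
  assumes N: "1 \<le> N" and w: "0 \<le> w" "w \<le> 1"
  shows "measure_pmf.expectation (Xvec_pmf w l t N) (pair_ratio N) \<le> w * geom_pair_ratio N (exp (- (l * t)))"
proof -
  have "measure_pmf.expectation (Xvec_pmf w l t N) (pair_ratio N)
      \<le> measure_pmf.expectation (Xvec_pmf w l t N) (\<lambda>X. singleton_pair_ratio N (X 0))"
    using N set_pmf_Xvec_pmf
    by (intro integral_mono_AE integrable_pair_ratio integrable_singleton_pair_ratio AE_pmfI
        pair_ratio_le_singleton_pair_ratio) auto
  also have "\<dots> = measure_pmf.expectation (map_pmf (\<lambda>X. X 0) (Xvec_pmf w l t N)) (singleton_pair_ratio N)"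
    by simp
  also have "map_pmf (\<lambda>X. X 0) (Xvec_pmf w l t N) = X_pmf w l t"
    unfolding Xvec_pmf_def using N by (subst Pi_pmf_component) auto
  finally show ?thesis using expectation_X_pmf_singleton_pair_ratio[OF N w] by simp
qed

lemma expectation_pair_ratio_ge:
  assumes N: "1 \<le> N" and w: "0 \<le> w" "w \<le> 1"
  shows "w * geom_pair_ratio N (exp (- (l * t))) * (1 - w) ^ (N - 1)
           \<le> measure_pmf.expectation (Xvec_pmf w l t N) (pair_ratio N)"
proof -
  define f where "f i v = (if i = 0 then singleton_pair_ratio N v else of_bool (v = 1))" for i v :: nat
  obtain m where Nm: "N = Suc m" using N by (cases N) auto
  have f_bounds: "0 \<le> f i v" "f i v \<le> 1" for i v
    using N by (auto simp: f_def singleton_pair_ratio_nonneg singleton_pair_ratio_le_1)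
  have f_0: "f 0 = singleton_pair_ratio N" and f_Suc: "f (Suc i) = (\<lambda>v. of_bool (v = 1))" for i
    by (simp_all add: f_def fun_eq_iff)
  have "(1 - w) ^ (N - 1) \<le> measure_pmf.expectation (X_pmf w l t) (\<lambda>v. of_bool (v = 1)) ^ m"
    using w expectation_X_pmf_singleton_ge[OF w] unfolding Nm by (simp add: power_mono)
  then have "w * geom_pair_ratio N (exp (- (l * t))) * (1 - w) ^ (N - 1)
      \<le> w * geom_pair_ratio N (exp (- (l * t))) * measure_pmf.expectation (X_pmf w l t) (\<lambda>v. of_bool (v = 1)) ^ m"
    using w geom_pair_ratio_nonneg by (intro mult_left_mono) auto
  also have "\<dots> = (\<Prod>i<N. measure_pmf.expectation (X_pmf w l t) (f i))"
  proof -
    have "(\<Prod>i<N. measure_pmf.expectation (X_pmf w l t) (f i))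
        = measure_pmf.expectation (X_pmf w l t) (f 0) * (\<Prod>i<m. measure_pmf.expectation (X_pmf w l t) (f (Suc i)))"
      unfolding Nm by (rule prod.lessThan_Suc_shift)
    then show ?thesis using expectation_X_pmf_singleton_pair_ratio[OF N w] by (simp add: f_0 f_Suc)
  qed
  also have "\<dots> = measure_pmf.expectation (Xvec_pmf w l t N) (\<lambda>X. \<Prod>i<N. f i (X i))"
    unfolding Xvec_pmf_def using f_bounds
    by (intro expectation_prod_Pi_pmf[symmetric] integrable_measure_pmf_bounded[where B = 1]) auto
  also have "\<dots> \<le> measure_pmf.expectation (Xvec_pmf w l t N) (pair_ratio N)"
    unfolding f_def using N set_pmf_Xvec_pmf f_bounds[unfolded f_def]
    by (intro integral_mono_AE integrable_pair_ratio integrable_measure_pmf_bounded[where B = 1] AE_pmfI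
        prod_singleton_indicators_le_pair_ratio)
       (auto simp: abs_le_iff intro!: prod_nonneg prod_le_1 order.trans[OF _ prod_nonneg])
  finally show ?thesis .
qed

lemma cN_bounds:
  fixes omega lam T :: "nat \<Rightarrow> real"
  assumes N: "2 \<le> N" and w: "0 \<le> omega N" "omega N \<le> 1"
  defines "a \<equiv> geom_pair_ratio N (exp (- (lam N * T N)))"
  shows "real N * omega N * a * (1 - omega N) ^ (N - 1) \<le> cN omega lam T N"
    and "cN omega lam T N \<le> real N * omega N * a"
proof -
  have "cN omega lam T N = real N * measure_pmf.expectation (Xvec_pmf (omega N) (lam N) (T N) N) (pair_ratio N)"
    unfolding cN_def expectation_nu1_ffact2[OF N] using N by (simp add: ffact2_def)
  then show "real N * omega N * a * (1 - omega N) ^ (N - 1) \<le> cN omega lam T N"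
    and "cN omega lam T N \<le> real N * omega N * a"
    using expectation_pair_ratio_le[of N "omega N" "lam N" "T N"] expectation_pair_ratio_ge[of N "omega N" "lam N" "T N"]
      N w unfolding a_def by (simp_all add: mult.assoc mult_left_mono)
qed

lemma asymp_equiv_sandwich_factors:
  fixes f g l u :: "'a \<Rightarrow> real"
  assumes "eventually (\<lambda>x. g x * l x \<le> f x \<and> f x \<le> g x * u x) F"
    and "(l \<longlongrightarrow> 1) F" and "(u \<longlongrightarrow> 1) F"
  shows "f \<sim>[F] g"
proof (rule asymp_equiv_sandwich_real)
  have "(\<lambda>x. g x * l x) \<sim>[F] (\<lambda>x. g x * 1)" "(\<lambda>x. g x * u x) \<sim>[F] (\<lambda>x. g x * 1)"
    by (intro asymp_equiv_mult asymp_equiv_refl tendsto_imp_asymp_equiv_const assms(2,3); simp)+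
  then show "(\<lambda>x. g x * l x) \<sim>[F] g" "(\<lambda>x. g x * u x) \<sim>[F] g"
    by simp_all
qed (use assms(1) in auto)

lemma cN_asymp_equiv:
  assumes omega: "\<forall>N. 0 \<le> omega N \<and> omega N \<le> 1" and lim: "(\<lambda>N. real N * omega N) \<longlonglongrightarrow> 0"
  shows "cN omega lam T \<sim>[sequentially] (\<lambda>N. real N * omega N * geom_pair_ratio N (exp (- (lam N * T N))))"
proof (rule asymp_equiv_sandwich_factors)
  show "\<forall>\<^sub>F N in sequentially.
      real N * omega N * geom_pair_ratio N (exp (- (lam N * T N))) * (1 - real N * omega N) \<le> cN omega lam T N \<and>
      cN omega lam T N \<le> real N * omega N * geom_pair_ratio N (exp (- (lam N * T N))) * 1"
    using eventually_ge_at_top[of 2]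
  proof eventually_elim
    case (elim N)
    have w: "0 \<le> omega N" "omega N \<le> 1" using omega by auto
    have "1 - real N * omega N \<le> 1 - real (N - 1) * omega N"
      using w by (intro diff_left_mono mult_right_mono) auto
    also have "\<dots> \<le> (1 - omega N) ^ (N - 1)"
      using Bernoulli_inequality[of "- omega N" "N - 1"] w by simp
    finally show ?case
      using cN_bounds[of N omega lam T] elim w geom_pair_ratio_nonneg
      by (auto intro: order.trans[OF mult_left_mono])
  qed
qed (use tendsto_diff[OF tendsto_const lim, of 1] in simp_all)

lemma cN_tendsto_zero:
  assumes omega: "\<forall>N. 0 \<le> omega N \<and> omega N \<le> 1" and lim: "(\<lambda>N. real N * omega N) \<longlonglongrightarrow> 0"
  shows "cN omega lam T \<longlonglongrightarrow> 0"
proof (rule tendsto_sandwich[OF _ _ tendsto_const lim])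
  show "\<forall>\<^sub>F N in sequentially. 0 \<le> cN omega lam T N"
    using eventually_ge_at_top[of 2]
  proof eventually_elim
    case (elim N)
    with omega show ?case
      using cN_bounds(1)[of N omega lam T] geom_pair_ratio_nonneg
      by (auto intro: order.trans[rotated])
  qed
  show "\<forall>\<^sub>F N in sequentially. cN omega lam T N \<le> real N * omega N"
    using eventually_ge_at_top[of 2]
  proof eventually_elim
    case (elim N)
    have "real N * omega N * geom_pair_ratio N (exp (- (lam N * T N))) \<le> real N * omega N * 1"
      using omega geom_pair_ratio_le_1[of N] elim by (intro mult_left_mono) auto
    moreover have "cN omega lam T N \<le> real N * omega N * geom_pair_ratio N (exp (- (lam N * T N)))"
      using elim omega by (intro cN_bounds(2)) auto
    ultimately show ?case by simp
  qed
qed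

section \<open>Asymptotics of the geometric pair ratio\<close>

lemma singleton_pair_ratio_Suc_ge_cutoff:
  assumes k: "L \<le> real k" and N: "2 \<le> N" and L: "1 \<le> L"
  shows "1 - 2 * real N / L \<le> singleton_pair_ratio N (Suc k)"
proof -
  define x where "x = real k"
  define n where "n = real N"
  have x: "L \<le> x" and n: "2 \<le> n" using k N by (simp_all add: x_def n_def)
  define D where "D = (x + n) * (x + n - 1)"
  have "0 < D" unfolding D_def using x n L by auto
  have "n \<le> n * n" using mult_right_mono[of 1 n n] n by simp
  moreover have "D - x * (x + 1) = 2 * n * x - 2 * x + n * n - n" "2 * n * (x + n - 1) = 2 * n * x + 2 * (n * n) - 2 * n"
    unfolding D_def by (simp_all add: algebra_simps)
  ultimately have "D - x * (x + 1) \<le> 2 * n * (x + n - 1)"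
    using x L by linarith
  also have "\<dots> \<le> 2 * n * D / L"
  proof -
    have "L * (x + n - 1) \<le> D" unfolding D_def using x n L by (intro mult_right_mono) auto
    then have "2 * n * (L * (x + n - 1)) / L \<le> 2 * n * D / L"
      using n L by (intro divide_right_mono mult_left_mono) auto
    then show ?thesis using L by simp
  qed
  finally have "D * (1 - 2 * n / L) \<le> x * (x + 1)" by (simp add: algebra_simps)
  then show ?thesis
    using \<open>0 < D\<close> N by (simp add: singleton_pair_ratio_Suc D_def x_def n_def pos_le_divide_eq mult.commute)
qed

lemma singleton_pair_ratio_Suc_le:
  assumes "2 \<le> N"
  shows "singleton_pair_ratio N (Suc k) \<le> real k * (real k + 1) / (real N * (real N - 1))"
proof -
  have "real N * (real N - 1) \<le> (real k + real N) * (real k + real N - 1)"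
    using assms by (intro mult_mono) auto
  moreover have "0 < real N * (real N - 1)" using assms by auto
  ultimately show ?thesis
    using assms by (simp add: singleton_pair_ratio_Suc divide_left_mono)
qed

lemma singleton_pair_ratio_Suc_ge:
  assumes "2 \<le> N"
  shows "real k * (real k + 1) / (real N)^2 - 2 * ((real k + 1) * (real k + 2) * (real k + 3)) / (real N)^3
           \<le> singleton_pair_ratio N (Suc k)"
proof -
  define x where "x = real k"
  define n where "n = real N"
  have x: "0 \<le> x" and n: "2 \<le> n" using assms by (simp_all add: x_def n_def)
  have square: "x * (x + 1) / (x + n)^2 \<le> x * (x + 1) / ((x + n) * (x + n - 1))"
  proof -
    have "(x + n) * (x + n - 1) \<le> (x + n)^2" using x n by (simp add: power2_eq_square)
    moreover have "0 < (x + n) * (x + n - 1)" using x n by auto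
    ultimately show ?thesis using x n by (intro divide_left_mono) auto
  qed
  \<comment> \<open>the tangent line of \<open>1 / (x + n)\<^sup>2\<close> at \<open>x = 0\<close> lies below it\<close>
  have tangent: "(n - 2 * x) / n^3 \<le> 1 / (x + n)^2"
  proof -
    have "(n - 2 * x) * (x + n)^2 = n^3 - 3 * x^2 * n - 2 * x^3"
      by (simp add: algebra_simps power2_eq_square power3_eq_cube)
    also have "\<dots> \<le> n^3"
    proof -
      have "0 \<le> 3 * x^2 * n" "0 \<le> 2 * x^3" using x n by auto
      then show ?thesis by linarith
    qed
    finally show ?thesis using n x by (simp add: field_simps)
  qed
  have "x * (x + 1) / n^2 - 2 * ((x + 1) * (x + 2) * (x + 3)) / n^3 \<le> x * (x + 1) * ((n - 2 * x) / n^3)"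
  proof -
    have "x * (x + 1) * ((n - 2 * x) / n^3) = x * (x + 1) / n^2 - 2 * (x * x * (x + 1)) / n^3"
      using n by (simp add: field_simps power2_eq_square power3_eq_cube)
    moreover have "x * x * (x + 1) \<le> (x + 1) * (x + 2) * (x + 3)"
      using x by (intro mult_mono) auto
    ultimately show ?thesis using n by (simp add: divide_right_mono)
  qed
  also have "\<dots> \<le> x * (x + 1) / (x + n)^2"
    using mult_left_mono[OF tangent, of "x * (x + 1)"] x by simp
  finally show ?thesis
    using square assms by (simp add: singleton_pair_ratio_Suc x_def n_def)
qed

lemma geom_pair_ratio_ge_cutoff:
  assumes N: "2 \<le> N" and L: "1 \<le> L" and p: "0 < p" "p \<le> 1"
  shows "1 - real L * p - 2 * real N / real L \<le> geom_pair_ratio N p"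
proof -
  define below :: "nat \<Rightarrow> real" where "below k = (if k < L then 1 else 0)" for k
  define c where "c = 2 * real N / real L"
  have "0 \<le> c" by (simp add: c_def)
  have pointwise: "1 - below k - c \<le> singleton_pair_ratio N (Suc k)" for k
  proof (cases "k < L")
    case True
    then show ?thesis using singleton_pair_ratio_nonneg[of N "Suc k"] \<open>0 \<le> c\<close> by (simp add: below_def)
  next
    case False
    then show ?thesis
      using singleton_pair_ratio_Suc_ge_cutoff[of "real L" k N] N L by (simp add: below_def c_def)
  qed
  have int_below: "integrable (measure_pmf (geometric_pmf p)) below"
    by (rule integrable_measure_pmf_bounded[where B = 1]) (simp add: below_def)
  have "measure_pmf.expectation (geometric_pmf p) below = (\<Sum>k<L. (1 - p) ^ k * p)"
    using p by (subst integral_measure_pmf[of "{..<L}"]) (auto simp: below_def split: if_splits)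
  also have "\<dots> \<le> (\<Sum>k<L. p)"
    using p by (intro sum_mono) (simp add: power_le_one)
  finally have "measure_pmf.expectation (geometric_pmf p) below \<le> real L * p" by simp
  moreover have "measure_pmf.expectation (geometric_pmf p) (\<lambda>k. 1 - below k - c) \<le> geom_pair_ratio N p"
    unfolding geom_pair_ratio_def using N pointwise int_below
    by (intro integral_mono integrable_singleton_pair_ratio Bochner_Integration.integrable_diff) auto
  moreover have "measure_pmf.expectation (geometric_pmf p) (\<lambda>k. 1 - below k - c)
      = 1 - measure_pmf.expectation (geometric_pmf p) below - c"
    using int_below by (simp add: Bochner_Integration.integral_diff)
  ultimately show ?thesis unfolding c_def by linarith
qed

lemma geom_pair_ratio_le:
  assumes N: "2 \<le> N" and p: "0 < p" "p \<le> 1"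
  shows "geom_pair_ratio N p \<le> (2 / p^2 - 2 / p) / (real N * (real N - 1))"
proof -
  note moments = geometric_pmf_moments[OF p]
  have "geom_pair_ratio N p \<le>
      measure_pmf.expectation (geometric_pmf p) (\<lambda>k. real k * (real k + 1) / (real N * (real N - 1)))"
    unfolding geom_pair_ratio_def using N
    by (intro integral_mono integrable_singleton_pair_ratio integrable_divide moments(1)
        singleton_pair_ratio_Suc_le) auto
  then show ?thesis using moments(2) by simp
qed

lemma geom_pair_ratio_ge:
  assumes N: "2 \<le> N" and p: "0 < p" "p \<le> 1"
  shows "(2 / p^2 - 2 / p) / (real N)^2 - 12 / (p^3 * (real N)^3) \<le> geom_pair_ratio N p"
proof -
  note moments = geometric_pmf_moments[OF p]
  have "(2 / p^2 - 2 / p) / (real N)^2 - 12 / (p^3 * (real N)^3) =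
      measure_pmf.expectation (geometric_pmf p) (\<lambda>k. real k * (real k + 1) / (real N)^2
        - 2 * ((real k + 1) * (real k + 2) * (real k + 3)) / (real N)^3)"
    using moments by (simp add: Bochner_Integration.integral_diff)
  also have "\<dots> \<le> geom_pair_ratio N p"
    unfolding geom_pair_ratio_def using N
    by (intro integral_mono integrable_singleton_pair_ratio Bochner_Integration.integrable_diff
        integrable_divide integrable_mult_right moments(1,3) singleton_pair_ratio_Suc_ge) auto
  finally show ?thesis .
qed

lemma eventually_tail_parameter:
  assumes "0 < \<kappa>" "0 < \<beta>"
  shows "\<forall>\<^sub>F N in sequentially. 2 \<le> N \<and> 0 < (\<kappa> * real N) powr - \<beta> \<and> (\<kappa> * real N) powr - \<beta> \<le> 1"
proof -
  have "filterlim (\<lambda>N. \<kappa> * real N) at_top sequentially" using assms by real_asymp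
  then have "\<forall>\<^sub>F N in sequentially. 1 \<le> \<kappa> * real N" by (simp add: filterlim_at_top)
  then show ?thesis
    using eventually_ge_at_top[of 2]
  proof eventually_elim
    case (elim N)
    then have "1 \<le> (\<kappa> * real N) powr \<beta>" using assms by (intro ge_one_powr_ge_zero) auto
    then show ?case using elim assms by (simp add: powr_minus inverse_le_1_iff)
  qed
qed

lemma geom_pair_ratio_supercritical:
  assumes \<kappa>: "0 < \<kappa>" and \<beta>: "1 < \<beta>"
  shows "(\<lambda>N. geom_pair_ratio N ((\<kappa> * real N) powr - \<beta>)) \<longlonglongrightarrow> 1"
proof (rule tendsto_sandwich)
  define g where "g = (1 + \<beta>) / 2"
  have "0 < g" using \<beta> by (simp add: g_def)
  have "0 < \<beta>" using \<beta> by simp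
  \<comment> \<open>cut off at \<open>L \<approx> N\<^sup>g\<close>, where \<open>1 < g < \<beta>\<close>\<close>
  show "\<forall>\<^sub>F N in sequentially. 1 - (real N powr g + 1) * (\<kappa> * real N) powr - \<beta> - 2 * real N / real N powr g
      \<le> geom_pair_ratio N ((\<kappa> * real N) powr - \<beta>)"
    using eventually_tail_parameter[OF \<kappa> \<open>0 < \<beta>\<close>]
  proof eventually_elim
    case (elim N)
    define p where "p = (\<kappa> * real N) powr - \<beta>"
    define L where "L = nat \<lceil>real N powr g\<rceil>"
    have Ng: "1 \<le> real N powr g" using elim \<open>0 < g\<close> by (intro ge_one_powr_ge_zero) auto
    have L: "real N powr g \<le> real L" "real L \<le> real N powr g + 1" using Ng unfolding L_def by linarith+
    have "1 - real L * p - 2 * real N / real L \<le> geom_pair_ratio N p"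
      using elim L Ng by (intro geom_pair_ratio_ge_cutoff) (auto simp: p_def)
    moreover have "real L * p \<le> (real N powr g + 1) * p" using L elim by (intro mult_right_mono) (auto simp: p_def)
    moreover have "2 * real N / real L \<le> 2 * real N / real N powr g"
      using L Ng elim by (intro divide_left_mono mult_pos_pos) auto
    ultimately show ?case unfolding p_def by linarith
  qed
  show "\<forall>\<^sub>F N in sequentially. geom_pair_ratio N ((\<kappa> * real N) powr - \<beta>) \<le> 1"
    using eventually_ge_at_top[of 1] by eventually_elim (rule geom_pair_ratio_le_1)
  show "(\<lambda>N. 1 - (real N powr g + 1) * (\<kappa> * real N) powr - \<beta> - 2 * real N / real N powr g) \<longlonglongrightarrow> 1"
    unfolding g_def using \<kappa> \<beta> by real_asymp
qed simp

lemma geom_pair_ratio_subcritical: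
  assumes \<kappa>: "0 < \<kappa>" and \<beta>: "0 < \<beta>" "\<beta> < 1"
  shows "(\<lambda>N. geom_pair_ratio N ((\<kappa> * real N) powr - \<beta>)) \<sim>[sequentially]
           (\<lambda>N. 2 * \<kappa> powr (2 * \<beta>) * real N powr (2 * \<beta> - 2))"
proof (rule asymp_equiv_sandwich_real)
  define P where "P N = (\<kappa> * real N) powr - \<beta>" for N :: nat
  show "(\<lambda>N. (2 / P N ^ 2 - 2 / P N) / (real N)^2 - 12 / (P N ^ 3 * (real N)^3)) \<sim>[sequentially]
      (\<lambda>N. 2 * \<kappa> powr (2 * \<beta>) * real N powr (2 * \<beta> - 2))"
    unfolding P_def using \<kappa> \<beta> by (real_asymp simp: powr_minus power2_eq_square powr_add[symmetric])
  show "(\<lambda>N. (2 / P N ^ 2 - 2 / P N) / (real N * (real N - 1))) \<sim>[sequentially]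
      (\<lambda>N. 2 * \<kappa> powr (2 * \<beta>) * real N powr (2 * \<beta> - 2))"
    unfolding P_def using \<kappa> \<beta> by (real_asymp simp: powr_minus power2_eq_square powr_add[symmetric])
  show "\<forall>\<^sub>F N in sequentially. geom_pair_ratio N ((\<kappa> * real N) powr - \<beta>) \<in>
      {(2 / P N ^ 2 - 2 / P N) / (real N)^2 - 12 / (P N ^ 3 * (real N)^3) ..
       (2 / P N ^ 2 - 2 / P N) / (real N * (real N - 1))}"
    using eventually_tail_parameter[OF \<kappa> \<beta>(1)]
    by eventually_elim (auto simp: P_def intro: geom_pair_ratio_le geom_pair_ratio_ge)
qed

lemma singleton_pair_ratio_Suc_tendsto:
  assumes K: "(\<lambda>N. real (K N) / real N) \<longlonglongrightarrow> r" and r: "0 \<le> r"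
  shows "(\<lambda>N. singleton_pair_ratio N (Suc (K N))) \<longlonglongrightarrow> (r / (r + 1))^2"
proof -
  define u where "u N = real (K N) / real N" for N
  have "(\<lambda>N. u N * (u N + 1 / real N) / ((u N + 1) * (u N + 1 - 1 / real N)))
      \<longlonglongrightarrow> r * (r + 0) / ((r + 1) * (r + 1 - 0))"
    using r unfolding u_def by (intro tendsto_intros K lim_inverse_n') auto
  moreover have "\<forall>\<^sub>F N in sequentially. u N * (u N + 1 / real N) / ((u N + 1) * (u N + 1 - 1 / real N))
      = singleton_pair_ratio N (Suc (K N))"
    using eventually_ge_at_top[of 1]
  proof eventually_elim
    case (elim N)
    then have "u N * (u N + 1 / real N) = real (K N) * (real (K N) + 1) / (real N)^2"
      "(u N + 1) * (u N + 1 - 1 / real N) = (real (K N) + real N) * (real (K N) + real N - 1) / (real N)^2"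
      by (simp_all add: u_def field_simps power2_eq_square)
    then show ?case using elim by (simp add: singleton_pair_ratio_Suc)
  qed
  ultimately have "(\<lambda>N. singleton_pair_ratio N (Suc (K N))) \<longlonglongrightarrow> r * (r + 0) / ((r + 1) * (r + 1 - 0))"
    by (rule Lim_transform_eventually)
  moreover have "r * (r + 0) / ((r + 1) * (r + 1 - 0)) = (r / (r + 1))^2"
    by (simp add: power2_eq_square)
  ultimately show ?thesis by simp
qed

definition coupling_step :: "real \<Rightarrow> nat \<Rightarrow> real" where
  "coupling_step \<kappa> N = - ln (1 - 1 / (\<kappa> * real N))"

lemma coupling_step_pos: "1 < \<kappa> * real N \<Longrightarrow> 0 < coupling_step \<kappa> N"
  unfolding coupling_step_def by (simp add: ln_less_zero_iff)

lemma one_minus_exp_coupling_step: "1 < \<kappa> * real N \<Longrightarrow> 1 - exp (- coupling_step \<kappa> N) = (\<kappa> * real N) powr - 1"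
  unfolding coupling_step_def by (simp add: powr_minus_divide)

lemma eventually_one_less_kappa_N:
  assumes "0 < \<kappa>"
  shows "\<forall>\<^sub>F N in sequentially. 2 \<le> N \<and> 1 < \<kappa> * real N"
proof -
  have "filterlim (\<lambda>N. \<kappa> * real N) at_top sequentially" using assms by real_asymp
  then have "\<forall>\<^sub>F N in sequentially. 1 < \<kappa> * real N" by (simp add: filterlim_at_top_dense)
  then show ?thesis using eventually_ge_at_top[of 2] by eventually_elim auto
qed

lemma coupling_steps_ratio_tendsto:
  assumes \<kappa>: "0 < \<kappa>" and e: "0 \<le> e"
  shows "(\<lambda>N. real (nat (\<lceil>e / coupling_step \<kappa> N\<rceil> - 1)) / real N) \<longlonglongrightarrow> \<kappa> * e"
proof (rule tendsto_sandwich)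
  have lim: "(\<lambda>N. e / (real N * coupling_step \<kappa> N)) \<longlonglongrightarrow> \<kappa> * e"
    unfolding coupling_step_def using \<kappa> by real_asymp
  show "(\<lambda>N. e / (real N * coupling_step \<kappa> N) - 1 / real N) \<longlonglongrightarrow> \<kappa> * e"
    using tendsto_diff[OF lim lim_inverse_n'] by simp
  show "(\<lambda>N. e / (real N * coupling_step \<kappa> N)) \<longlonglongrightarrow> \<kappa> * e" by (fact lim)
  show "\<forall>\<^sub>F N in sequentially. e / (real N * coupling_step \<kappa> N) - 1 / real N
      \<le> real (nat (\<lceil>e / coupling_step \<kappa> N\<rceil> - 1)) / real N"
    using eventually_one_less_kappa_N[OF \<kappa>]
  proof eventually_elim
    case (elim N)
    then have "0 \<le> e / coupling_step \<kappa> N" using e coupling_step_pos[of \<kappa> N] by simp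
    from divide_right_mono[OF nat_ceiling_minus_1_bounds(1)[OF this], of "real N"]
    show ?case by (simp add: diff_divide_distrib mult.commute)
  qed
  show "\<forall>\<^sub>F N in sequentially. real (nat (\<lceil>e / coupling_step \<kappa> N\<rceil> - 1)) / real N
      \<le> e / (real N * coupling_step \<kappa> N)"
    using eventually_one_less_kappa_N[OF \<kappa>]
  proof eventually_elim
    case (elim N)
    then have "0 \<le> e / coupling_step \<kappa> N" using e coupling_step_pos[of \<kappa> N] by simp
    from divide_right_mono[OF nat_ceiling_minus_1_bounds(2)[OF this], of "real N"]
    show ?case by (simp add: mult.commute)
  qed
qed

locale Y_kappa_law = prob_space M for M :: "real measure" +
  fixes Y :: "real \<Rightarrow> real" and \<kappa> :: real
  assumes Y_measurable [measurable]: "Y \<in> borel_measurable M"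
    and Y_range: "\<And>w. w \<in> space M \<Longrightarrow> 0 \<le> Y w \<and> Y w \<le> 1"
    and Y_tail: "\<And>x. 0 \<le> x \<Longrightarrow> x < 1 \<Longrightarrow> prob {w \<in> space M. x < Y w} = exp (- x / (\<kappa> * (1 - x)))"
    and kappa_pos: "0 < \<kappa>"
begin

definition tail_exponent :: "real \<Rightarrow> real" where
  "tail_exponent y = y / (\<kappa> * (1 - y))"

lemma tail_exponent_measurable [measurable]: "(\<lambda>w. tail_exponent (Y w)) \<in> borel_measurable M"
  unfolding tail_exponent_def by measurable

lemma tail_exponent_inverse:
  assumes "0 \<le> t"
  shows "0 \<le> \<kappa> * t / (1 + \<kappa> * t)" "\<kappa> * t / (1 + \<kappa> * t) < 1"
    and "tail_exponent (\<kappa> * t / (1 + \<kappa> * t)) = t"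
proof -
  have pos: "0 < 1 + \<kappa> * t" using assms kappa_pos by (simp add: add_pos_nonneg)
  then show "0 \<le> \<kappa> * t / (1 + \<kappa> * t)" "\<kappa> * t / (1 + \<kappa> * t) < 1"
    using assms kappa_pos by simp_all
  have "1 - \<kappa> * t / (1 + \<kappa> * t) = 1 / (1 + \<kappa> * t)" using pos by (simp add: field_simps)
  then show "tail_exponent (\<kappa> * t / (1 + \<kappa> * t)) = t"
    using pos kappa_pos by (simp add: tail_exponent_def)
qed

lemma less_tail_exponent_iff:
  assumes "0 \<le> t" "0 \<le> y" "y < 1"
  shows "t < tail_exponent y \<longleftrightarrow> \<kappa> * t / (1 + \<kappa> * t) < y"
proof -
  have "0 < 1 + \<kappa> * t" "0 < \<kappa> * (1 - y)" using assms kappa_pos by (auto simp: add_pos_nonneg)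
  then show ?thesis
    by (simp add: tail_exponent_def pos_less_divide_eq pos_divide_less_eq algebra_simps)
qed

lemma AE_Y_less_1: "AE w in M. Y w < 1"
proof -
  define A where "A = {w \<in> space M. 1 \<le> Y w}"
  have A [measurable]: "A \<in> sets M" unfolding A_def by measurable
  have "prob A \<le> exp (- real n)" for n :: nat
  proof -
    note inv = tail_exponent_inverse[of "real n"]
    have "prob A \<le> prob {w \<in> space M. \<kappa> * real n / (1 + \<kappa> * real n) < Y w}"
      using inv(2) by (intro finite_measure_mono) (auto simp: A_def)
    also have "\<dots> = exp (- real n)"
      using Y_tail[OF inv(1,2)] inv(3) by (simp add: tail_exponent_def)
    finally show ?thesis .
  qed
  moreover have "(\<lambda>n::nat. exp (- real n)) \<longlonglongrightarrow> 0" by real_asymp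
  ultimately have "prob A = 0"
    using LIMSEQ_le_const[of _ 0 "prob A"] measure_nonneg[of M A] by (force simp: eventually_sequentially)
  then show ?thesis
    by (intro AE_I'[where N = A]) (auto simp: A_def emeasure_eq_measure null_sets_def)
qed

lemma exponential_tail:
  assumes "0 \<le> t"
  shows "prob {w \<in> space M. t < tail_exponent (Y w)} = exp (- t)"
proof -
  note inv = tail_exponent_inverse[OF assms]
  have "prob {w \<in> space M. t < tail_exponent (Y w)} = prob {w \<in> space M. \<kappa> * t / (1 + \<kappa> * t) < Y w}"
    using AE_Y_less_1 by (intro finite_measure_eq_AE) (auto simp: less_tail_exponent_iff assms Y_range)
  also have "\<dots> = exp (- t)"
    using Y_tail[OF inv(1,2)] inv(3) by (simp add: tail_exponent_def)
  finally show ?thesis .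
qed

definition coupled_geometric :: "nat \<Rightarrow> real \<Rightarrow> nat" where
  "coupled_geometric N w = nat (\<lceil>tail_exponent (Y w) / coupling_step \<kappa> N\<rceil> - 1)"

lemma coupled_geometric_measurable [measurable]: "coupled_geometric N \<in> measurable M (count_space UNIV)"
  unfolding coupled_geometric_def by measurable

lemma distr_coupled_geometric:
  assumes "1 < \<kappa> * real N"
  shows "distr M (count_space UNIV) (coupled_geometric N) = measure_pmf (geometric_pmf ((\<kappa> * real N) powr - 1))"
  using distr_ceiling_div_exponential[OF tail_exponent_measurable exponential_tail coupling_step_pos[OF assms]]
  by (simp add: one_minus_exp_coupling_step[OF assms] coupled_geometric_def[abs_def])

lemma geom_pair_ratio_eq_integral_coupled:
  assumes "1 < \<kappa> * real N"
  shows "geom_pair_ratio N ((\<kappa> * real N) powr - 1) = (\<integral>w. singleton_pair_ratio N (Suc (coupled_geometric N w)) \<partial>M)"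
  unfolding geom_pair_ratio_def distr_coupled_geometric[OF assms, symmetric] by (simp add: integral_distr)

lemma singleton_pair_ratio_coupled_tendsto:
  assumes "w \<in> space M" "Y w < 1"
  shows "(\<lambda>N. singleton_pair_ratio N (Suc (coupled_geometric N w))) \<longlonglongrightarrow> (Y w)^2"
proof -
  have "0 \<le> Y w" using assms Y_range by simp
  then have "0 \<le> tail_exponent (Y w)" using assms kappa_pos by (simp add: tail_exponent_def)
  moreover have "\<kappa> * tail_exponent (Y w) / (\<kappa> * tail_exponent (Y w) + 1) = Y w"
    using assms kappa_pos by (simp add: tail_exponent_def field_simps)
  ultimately show ?thesis
    using singleton_pair_ratio_Suc_tendsto[OF coupling_steps_ratio_tendsto[OF kappa_pos], of "tail_exponent (Y w)"]
      kappa_pos by (simp add: coupled_geometric_def)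
qed

lemma geom_pair_ratio_critical:
  "(\<lambda>N. geom_pair_ratio N ((\<kappa> * real N) powr - 1)) \<longlonglongrightarrow> (\<integral>w. (Y w)^2 \<partial>M)"
proof -
  define s where "s N w = (if 2 \<le> N \<and> 1 < \<kappa> * real N then singleton_pair_ratio N (Suc (coupled_geometric N w)) else 0)"
    for N w
  have [measurable]: "s N \<in> borel_measurable M" for N
    unfolding s_def by measurable
  have "(\<lambda>N. integral\<^sup>L M (s N)) \<longlonglongrightarrow> (\<integral>w. (Y w)^2 \<partial>M)"
  proof (rule integral_dominated_convergence[where w = "\<lambda>_. 1"])
    show "AE w in M. (\<lambda>N. s N w) \<longlonglongrightarrow> (Y w)^2"
      using AE_Y_less_1
    proof (rule AE_mp[OF _ AE_I2[OF impI]])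
      fix w assume "w \<in> space M" "Y w < 1"
      then have "(\<lambda>N. singleton_pair_ratio N (Suc (coupled_geometric N w))) \<longlonglongrightarrow> (Y w)^2"
        by (rule singleton_pair_ratio_coupled_tendsto)
      moreover have "\<forall>\<^sub>F N in sequentially. singleton_pair_ratio N (Suc (coupled_geometric N w)) = s N w"
        using eventually_one_less_kappa_N[OF kappa_pos] by eventually_elim (simp add: s_def)
      ultimately show "(\<lambda>N. s N w) \<longlonglongrightarrow> (Y w)^2" by (rule Lim_transform_eventually)
    qed
    show "AE w in M. norm (s N w) \<le> 1" for N
      by (simp add: s_def singleton_pair_ratio_nonneg singleton_pair_ratio_le_1)
  qed simp_all
  moreover have "\<forall>\<^sub>F N in sequentially. integral\<^sup>L M (s N) = geom_pair_ratio N ((\<kappa> * real N) powr - 1)"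
    using eventually_one_less_kappa_N[OF kappa_pos]
  proof eventually_elim
    case (elim N)
    then have "s N = (\<lambda>w. singleton_pair_ratio N (Suc (coupled_geometric N w)))"
      by (simp add: s_def fun_eq_iff)
    then show ?case by (simp only: geom_pair_ratio_eq_integral_coupled[OF conjunct2[OF elim]])
  qed
  ultimately show ?thesis by (rule Lim_transform_eventually)
qed

lemma second_moment_pos: "0 < (\<integral>w. (Y w)^2 \<partial>M)"
proof -
  define A where "A = {w \<in> space M. 1/2 < Y w}"
  have A [measurable]: "A \<in> sets M" unfolding A_def by measurable
  have "(1/4) * prob A = (\<integral>w. (1/4) * indicator A w \<partial>M)" by simp
  also have "\<dots> \<le> (\<integral>w. (Y w)^2 \<partial>M)"
  proof (rule integral_mono_AE)
    show "integrable M (\<lambda>w. (Y w)^2)"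
      using Y_range by (intro integrable_const_bound[where B = 1]) (auto simp: abs_le_iff power_le_one)
    show "AE w in M. (1/4) * indicator A w \<le> (Y w)^2"
    proof (rule AE_I2)
      fix w assume "w \<in> space M"
      show "(1/4) * indicator A w \<le> (Y w)^2"
        using power_mono[of "1/2" "Y w" 2] by (cases "w \<in> A") (auto simp: A_def power2_eq_square)
    qed
    show "integrable M (\<lambda>w. (1/4) * indicator A w :: real)"
      using A by (intro integrable_mult_right integrable_real_indicator) (auto simp: less_top[symmetric])
  qed
  finally have "(1/4) * prob A \<le> (\<integral>w. (Y w)^2 \<partial>M)" .
  moreover have "0 < prob A" using Y_tail[of "1/2"] by (simp add: A_def)
  ultimately show ?thesis by linarith
qed

end

section \<open>The three regimes of the dormancy parameter\<close>

lemma exp_neg_eventually_eq_powr: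
  assumes \<kappa>: "0 < \<kappa>" and growth: "\<forall>\<^sub>F N in sequentially. lam N * T N = \<beta> * ln (\<kappa> * real N)"
  shows "\<forall>\<^sub>F N in sequentially. exp (- (lam N * T N)) = (\<kappa> * real N) powr - \<beta>"
  using growth eventually_ge_at_top[of 1]
  by eventually_elim (use \<kappa> in \<open>simp add: powr_def\<close>)

lemma cN_asymp_equiv_powr:
  assumes omega: "\<forall>N. 0 \<le> omega N \<and> omega N \<le> 1" and lim: "(\<lambda>N. real N * omega N) \<longlonglongrightarrow> 0"
    and \<kappa>: "0 < \<kappa>" and growth: "\<forall>\<^sub>F N in sequentially. lam N * T N = \<beta> * ln (\<kappa> * real N)"
  shows "cN omega lam T \<sim>[sequentially] (\<lambda>N. real N * omega N * geom_pair_ratio N ((\<kappa> * real N) powr - \<beta>))"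
proof -
  have "(\<lambda>N. real N * omega N * geom_pair_ratio N (exp (- (lam N * T N)))) \<sim>[sequentially]
      (\<lambda>N. real N * omega N * geom_pair_ratio N ((\<kappa> * real N) powr - \<beta>))"
    using exp_neg_eventually_eq_powr[OF \<kappa> growth] by (intro asymp_equiv_refl_ev) (auto elim: eventually_mono)
  with cN_asymp_equiv[OF omega lim] show ?thesis by (rule asymp_equiv_trans)
qed

lemma cN_asymp_supercritical:
  assumes omega: "\<forall>N. 0 \<le> omega N \<and> omega N \<le> 1" and lim: "(\<lambda>N. real N * omega N) \<longlonglongrightarrow> 0"
    and \<kappa>: "0 < \<kappa>" and \<beta>: "1 < \<beta>"
    and growth: "\<forall>\<^sub>F N in sequentially. lam N * T N = \<beta> * ln (\<kappa> * real N)"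
  shows "cN omega lam T \<sim>[sequentially] (\<lambda>N. real N * omega N)"
proof -
  have "(\<lambda>N. geom_pair_ratio N ((\<kappa> * real N) powr - \<beta>)) \<sim>[sequentially] (\<lambda>_. 1)"
    using geom_pair_ratio_supercritical[OF \<kappa> \<beta>] by (rule tendsto_imp_asymp_equiv_const) simp
  from asymp_equiv_trans[OF cN_asymp_equiv_powr[OF omega lim \<kappa> growth] asymp_equiv_mult[OF asymp_equiv_refl this]]
  show ?thesis by simp
qed

lemma (in Y_kappa_law) cN_asymp_critical:
  assumes omega: "\<forall>N. 0 \<le> omega N \<and> omega N \<le> 1" and lim: "(\<lambda>N. real N * omega N) \<longlonglongrightarrow> 0"
    and growth: "\<forall>\<^sub>F N in sequentially. lam N * T N = ln (\<kappa> * real N)"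
  shows "cN omega lam T \<sim>[sequentially] (\<lambda>N. real N * omega N * (\<integral>w. (Y w)^2 \<partial>M))"
proof -
  have limit: "(\<lambda>N. geom_pair_ratio N ((\<kappa> * real N) powr - 1)) \<sim>[sequentially] (\<lambda>_. \<integral>w. (Y w)^2 \<partial>M)"
    using second_moment_pos by (intro tendsto_imp_asymp_equiv_const[OF geom_pair_ratio_critical]) simp
  have "cN omega lam T \<sim>[sequentially] (\<lambda>N. real N * omega N * geom_pair_ratio N ((\<kappa> * real N) powr - 1))"
    using cN_asymp_equiv_powr[OF omega lim kappa_pos, of lam T 1] growth by simp
  from asymp_equiv_trans[OF this asymp_equiv_mult[OF asymp_equiv_refl limit]] show ?thesis .
qed

lemma cN_asymp_subcritical:
  assumes omega: "\<forall>N. 0 \<le> omega N \<and> omega N \<le> 1" and lim: "(\<lambda>N. real N * omega N) \<longlonglongrightarrow> 0"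
    and \<kappa>: "0 < \<kappa>" and \<beta>: "0 < \<beta>" "\<beta> < 1"
    and growth: "\<forall>\<^sub>F N in sequentially. lam N * T N = \<beta> * ln (\<kappa> * real N)"
  shows "cN omega lam T \<sim>[sequentially] (\<lambda>N. 2 * \<kappa> powr (2 * \<beta>) * omega N * real N powr (2 * \<beta> - 1))"
proof -
  have "cN omega lam T \<sim>[sequentially] (\<lambda>N. real N * omega N * (2 * \<kappa> powr (2 * \<beta>) * real N powr (2 * \<beta> - 2)))"
    using asymp_equiv_trans[OF cN_asymp_equiv_powr[OF omega lim \<kappa> growth]
        asymp_equiv_mult[OF asymp_equiv_refl geom_pair_ratio_subcritical[OF \<kappa> \<beta>]]] .
  also have "(\<lambda>N. real N * omega N * (2 * \<kappa> powr (2 * \<beta>) * real N powr (2 * \<beta> - 2)))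
      = (\<lambda>N. 2 * \<kappa> powr (2 * \<beta>) * omega N * real N powr (2 * \<beta> - 1))"
  proof
    fix N
    have "real N powr (2 * \<beta> - 1) = real N * real N powr (2 * \<beta> - 2)"
      using powr_add[of "real N" 1 "2 * \<beta> - 2"] by simp
    then show "real N * omega N * (2 * \<kappa> powr (2 * \<beta>) * real N powr (2 * \<beta> - 2))
        = 2 * \<kappa> powr (2 * \<beta>) * omega N * real N powr (2 * \<beta> - 1)"
      by (simp only: mult_ac)
  qed
  finally show ?thesis .
qed

theorem lemma3p2:
  fixes omega lam T :: "nat \<Rightarrow> real"
  assumes omega_range: "\<forall>N. 0 \<le> omega N \<and> omega N \<le> 1"
    and lam_pos: "\<forall>N. 0 < lam N"
    and T_pos: "\<forall>N. 0 < T N"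
    and lim: "(\<lambda>N. real N * omega N) \<longlonglongrightarrow> 0"
  shows "(\<lambda>N. cN omega lam T N) \<longlonglongrightarrow> 0 \<and>
    (\<forall>\<kappa> \<beta>. 0 < \<kappa> \<and> 0 < \<beta> \<and>
        (\<forall>\<^sub>F N in sequentially. lam N * T N = \<beta> * ln (\<kappa> * real N)) \<longrightarrow>
      (\<beta> > 1 \<longrightarrow> (\<lambda>N. cN omega lam T N) \<sim>[sequentially] (\<lambda>N. real N * omega N)) \<and>
      (\<beta> = 1 \<longrightarrow>
         (\<forall>(M :: real measure) Y. prob_space M \<and> Y \<in> borel_measurable M \<and>
             (\<forall>x\<in>space M. 0 \<le> Y x \<and> Y x \<le> 1) \<and>
             (\<forall>x. 0 \<le> x \<and> x < 1 \<longrightarrow>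
                measure M {w \<in> space M. Y w > x} = exp (- x / (\<kappa> * (1 - x)))) \<longrightarrow>
           (\<lambda>N. cN omega lam T N) \<sim>[sequentially]
             (\<lambda>N. real N * omega N * (\<integral>w. (Y w)^2 \<partial>M)))) \<and>
      (\<beta> < 1 \<longrightarrow> (\<lambda>N. cN omega lam T N) \<sim>[sequentially]
             (\<lambda>N. 2 * \<kappa> powr (2 * \<beta>) * omega N * real N powr (2 * \<beta> - 1))))"
proof (intro conjI allI impI)
  show "(\<lambda>N. cN omega lam T N) \<longlonglongrightarrow> 0"
    using cN_tendsto_zero[OF omega_range lim] .
next
  fix \<kappa> \<beta> :: real
  assume "0 < \<kappa> \<and> 0 < \<beta> \<and> (\<forall>\<^sub>F N in sequentially. lam N * T N = \<beta> * ln (\<kappa> * real N))" "1 < \<beta>"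
  then show "(\<lambda>N. cN omega lam T N) \<sim>[sequentially] (\<lambda>N. real N * omega N)"
    by (elim conjE) (rule cN_asymp_supercritical[OF omega_range lim])
next
  fix \<kappa> \<beta> :: real and M :: "real measure" and Y
  assume params: "0 < \<kappa> \<and> 0 < \<beta> \<and> (\<forall>\<^sub>F N in sequentially. lam N * T N = \<beta> * ln (\<kappa> * real N))"
    and "\<beta> = 1"
    and law: "prob_space M \<and> Y \<in> borel_measurable M \<and> (\<forall>x\<in>space M. 0 \<le> Y x \<and> Y x \<le> 1) \<and>
      (\<forall>x. 0 \<le> x \<and> x < 1 \<longrightarrow> measure M {w \<in> space M. Y w > x} = exp (- x / (\<kappa> * (1 - x))))"
  interpret Y_kappa_law M Y \<kappa>
    unfolding Y_kappa_law_def Y_kappa_law_axioms_def using law params by blast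
  show "(\<lambda>N. cN omega lam T N) \<sim>[sequentially] (\<lambda>N. real N * omega N * (\<integral>w. (Y w)^2 \<partial>M))"
    using params \<open>\<beta> = 1\<close> by (intro cN_asymp_critical[OF omega_range lim]) simp
next
  fix \<kappa> \<beta> :: real
  assume "0 < \<kappa> \<and> 0 < \<beta> \<and> (\<forall>\<^sub>F N in sequentially. lam N * T N = \<beta> * ln (\<kappa> * real N))" "\<beta> < 1"
  then show "(\<lambda>N. cN omega lam T N) \<sim>[sequentially]
      (\<lambda>N. 2 * \<kappa> powr (2 * \<beta>) * omega N * real N powr (2 * \<beta> - 1))"
    by (elim conjE) (rule cN_asymp_subcritical[OF omega_range lim])
qed

end
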